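(* Consider the linear difference equation in an unknown sequence $\{x(n)\}_{n \in \mathbb{Z}}$ \[ a_r(n) x(n + r) + \ldots + a_1(n) x(n + 1) + a_0(n) x(n) = 0 \quad \text{for every } n \in \mathbb{Z}, \] where $\{a_0(n)\}_{n\in\mathbb{Z}}, \ldots, \{a_r(n)\}_{n\in\mathbb{Z}}$ are arbitrary numerical sequences. Assume that the space $W$ of solutions of this equation whose support $\operatorname{supp}(\{x(n)\}) = \{i \in \mathbb{Z} \mid x(i) \neq 0\}$ is contained in $\mathbb{Z}_{\geqslant 0}$ is infinite-dimensional. Then there exists an index $J > 0$ such that this equation has a nonzero solution with support contained in $\{1, 2, \ldots, J\}$.
   Context: Solutions are two-sided numerical sequences indexed by $\mathbb{Z}$; the coefficients are arbitrary sequences (no nonvanishing assumption on $a_0$ or $a_r$), and the number $r$ is the order of the equation. The solution set is a vector space. *)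

theory Defs
  imports Complex_Main "HOL-Library.Function_Algebras"
begin

definition seq_scale :: "complex \<Rightarrow> (int \<Rightarrow> complex) \<Rightarrow> (int \<Rightarrow> complex)" where
  "seq_scale c x = (\<lambda>n. c * x n)"

definition is_solution :: "nat \<Rightarrow> (nat \<Rightarrow> int \<Rightarrow> complex) \<Rightarrow> (int \<Rightarrow> complex) \<Rightarrow> bool" where
  "is_solution r a x \<longleftrightarrow> (\<forall>n::int. (\<Sum>k\<le>r. a k n * x (n + int k)) = 0)"

definition supp_seq :: "(int \<Rightarrow> complex) \<Rightarrow> int set" where
  "supp_seq x = {i. x i \<noteq> 0}"

definition infinite_dimensional :: "(int \<Rightarrow> complex) set \<Rightarrow> bool" where
  "infinite_dimensional W \<longleftrightarrow> \<not> (\<exists>B. finite B \<and> W \<subseteq> module.span seq_scale B)"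

end

theory Submission
  imports Defs
begin

text \<open>Take r + 2 independent solutions supported in \<open>{0..}\<close>. Elements of their span are
  determined by their values on a finite window \<open>{0..J}\<close>, and the r + 1 linear conditions
  \<open>x 0 = x (J+1) = \<dots> = x (J+r) = 0\<close> leave a nonzero x in the span, hence one with
  \<open>x n\<^sub>0 \<noteq> 0\<close> for some \<open>1 \<le> n\<^sub>0 \<le> J\<close>. Cutting x off after J yields again a solution:
  the equation at \<open>n \<le> J\<close> only involves \<open>x\<close> on \<open>{..J+r}\<close>, where nothing changed.\<close>

interpretation seq: vector_space seq_scale
  by unfold_locales (auto simp: seq_scale_def fun_eq_iff algebra_simps)

lemma sum_fun_apply: "(sum f A) n = (\<Sum>a\<in>A. f a n)"
  for f :: "'a \<Rightarrow> 'i \<Rightarrow> 'c::comm_monoid_add"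
  by (induction A rule: infinite_finite_induct) auto

lemma seq_subspace_solutions: "seq.subspace {x. is_solution r a x}"
  by (auto simp: seq.subspace_def is_solution_def seq_scale_def distrib_left sum.distrib
      mult.left_commute[of _ c for c] sum_distrib_left[symmetric])

lemma seq_subspace_supp_subset: "seq.subspace {x. supp_seq x \<subseteq> S}"
proof (rule seq.subspaceI)
  fix x y assume "x \<in> {x. supp_seq x \<subseteq> S}" "y \<in> {x. supp_seq x \<subseteq> S}"
  then have "supp_seq (x + y) \<subseteq> supp_seq x \<union> supp_seq y"
    by (auto simp: supp_seq_def)
  with \<open>x \<in> _\<close> \<open>y \<in> _\<close> show "x + y \<in> {x. supp_seq x \<subseteq> S}" by auto
qed (auto simp: supp_seq_def seq_scale_def)

lemma infinite_dimensional_independent_subset: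
  assumes "infinite_dimensional W"
  shows "\<exists>B. finite B \<and> B \<subseteq> W \<and> seq.independent B \<and> card B = n"
proof (induction n)
  case 0
  show ?case by (intro exI[of _ "{}"]) (auto simp: seq.dependent_def)
next
  case (Suc n)
  then obtain B where B: "finite B" "B \<subseteq> W" "seq.independent B" "card B = n"
    by blast
  with assms obtain w where "w \<in> W" "w \<notin> seq.span B"
    by (auto simp: infinite_dimensional_def)
  with B show ?case
    by (intro exI[of _ "insert w B"]) (auto simp: seq.independent_insert seq.span_base)
qed

lemma seq_span_has_nonzero_vanishing_on:
  assumes "finite P" "seq.independent B" "card P < card B"
  shows "\<exists>x\<in>seq.span B. x \<noteq> 0 \<and> (\<forall>p\<in>P. x p = 0)"
proof (rule ccontr)
  \<comment> \<open>Otherwise restriction to P embeds \<open>span B\<close> into the span of the \<open>card P\<close> point masses on P.\<close>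
  define restr where "restr x = (\<lambda>n. if n \<in> P then x n else 0)" for x :: "int \<Rightarrow> complex"
  define delta where "delta p = (\<lambda>n. if n = p then 1 else 0 :: complex)" for p :: int
  interpret restr: Vector_Spaces.linear seq_scale seq_scale restr
    by unfold_locales (auto simp: restr_def seq_scale_def fun_eq_iff)
  assume "\<not> ?thesis"
  then have "restr x = 0 \<Longrightarrow> x = 0" if "x \<in> seq.span B" for x
    using that by (simp add: restr_def fun_eq_iff) (metis (full_types))
  then have inj: "inj_on restr (seq.span B)"
    by (simp add: restr.inj_on_iff_eq_0)
  have restr_eq: "restr x = (\<Sum>p\<in>P. seq_scale (x p) (delta p))" for x
    by (auto simp: fun_eq_iff sum_fun_apply restr_def delta_def seq_scale_def
        \<open>finite P\<close> if_distrib cong: if_cong)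
  have "restr ` B \<subseteq> seq.span (delta ` P)"
    unfolding restr_eq by (intro image_subsetI seq.span_sum seq.span_scale seq.span_base imageI)
  then have "card (restr ` B) \<le> card (delta ` P)"
    using restr.independent_injective_image[OF assms(2) inj] seq.independent_span_bound
    by (simp add: \<open>finite P\<close>)
  also have "\<dots> \<le> card P"
    using \<open>finite P\<close> by (rule card_image_le)
  also have "card (restr ` B) = card B"
    using inj_on_subset[OF inj seq.span_superset] by (rule card_image)
  finally show False
    using assms(3) by simp
qed

lemma seq_span_determined_by_finitely_many_values:
  assumes "finite B"
  shows "\<exists>F. finite F \<and> (\<forall>x\<in>seq.span B. (\<forall>n\<in>F. x n = 0) \<longrightarrow> x = 0)"
  using assms
proof (induction B rule: finite_induct)
  case empty
  show ?case by auto
next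
  case (insert b B)
  then obtain F where F: "finite F" "\<forall>x\<in>seq.span B. (\<forall>n\<in>F. x n = 0) \<longrightarrow> x = 0"
    by blast
  show ?case
  proof (cases "\<exists>y\<in>seq.span (insert b B). y \<noteq> 0 \<and> (\<forall>n\<in>F. y n = 0)")
    case False
    with F show ?thesis by blast
  next
    case True
    then obtain y where y: "y \<in> seq.span (insert b B)" "y \<noteq> 0" "\<forall>n\<in>F. y n = 0"
      by blast
    then obtain m where "y m \<noteq> 0"
      by (auto simp: fun_eq_iff)
    have "y \<notin> seq.span B"
      using F y by blast
    with y(1) have "b \<in> seq.span (insert y B)"
      by (rule seq.in_span_insert)
    then have span_subset: "seq.span (insert b B) \<subseteq> seq.span (insert y B)"
      by (meson insert_subset seq.span_minimal seq.span_superset seq.subspace_span subset_insertI2)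
    have "x = 0" if x: "x \<in> seq.span (insert b B)" "\<forall>n\<in>insert m F. x n = 0" for x
    proof -
      obtain c where "x - seq_scale c y \<in> seq.span B"
        using x(1) span_subset seq.span_breakdown_eq by blast
      moreover have "\<forall>n\<in>F. (x - seq_scale c y) n = 0"
        using x(2) y(3) by (simp add: seq_scale_def)
      ultimately have x_eq: "x = seq_scale c y"
        using F(2) by auto
      with x(2) \<open>y m \<noteq> 0\<close> have "c = 0"
        by (simp add: seq_scale_def)
      with x_eq show "x = 0"
        by (simp add: seq_scale_def fun_eq_iff)
    qed
    with F(1) show ?thesis
      by (intro exI[of _ "insert m F"] conjI) (simp, blast)
  qed
qed

lemma is_solution_truncate:
  assumes "is_solution r a x" and "\<forall>n\<in>{J<..J + int r}. x n = 0"
  shows "is_solution r a (\<lambda>n. if n \<le> J then x n else 0)"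
  unfolding is_solution_def
proof
  fix n :: int
  show "(\<Sum>k\<le>r. a k n * (if n + int k \<le> J then x (n + int k) else 0)) = 0"
  proof (cases "n \<le> J")
    case True
    then have "(\<Sum>k\<le>r. a k n * (if n + int k \<le> J then x (n + int k) else 0))
        = (\<Sum>k\<le>r. a k n * x (n + int k))"
      using assms(2) by (intro sum.cong) auto
    also have "\<dots> = 0"
      using assms(1) by (simp add: is_solution_def)
    finally show ?thesis .
  qed simp
qed

lemma truncated_solution_nonzero:
  assumes "is_solution r a x" "supp_seq x \<subseteq> {0..}" "\<forall>n\<in>insert 0 {J<..J + int r}. x n = 0"
    and "x n0 \<noteq> 0" "n0 \<le> J"
  shows "J > 0 \<and> (\<exists>y. is_solution r a y \<and> y \<noteq> (\<lambda>_. 0) \<and> supp_seq y \<subseteq> {1..J})"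
proof -
  define y where "y = (\<lambda>n. if n \<le> J then x n else 0)"
  have supp_x: "n \<ge> 1" if "x n \<noteq> 0" for n
  proof -
    have "n \<in> supp_seq x"
      using that by (simp add: supp_seq_def)
    with assms(2) have "n \<ge> 0"
      by auto
    moreover have "n \<noteq> 0"
      using that assms(3) by auto
    ultimately show ?thesis
      by simp
  qed
  have "is_solution r a y"
    unfolding y_def using assms(1,3) by (intro is_solution_truncate) auto
  moreover have "supp_seq y \<subseteq> {1..J}"
    using supp_x by (auto simp: supp_seq_def y_def split: if_splits)
  moreover have "y n0 \<noteq> 0"
    using assms(4,5) by (simp add: y_def)
  then have "y \<noteq> (\<lambda>_. 0)"
    by auto
  moreover have "J > 0"
    using supp_x[OF assms(4)] assms(5) by simp
  ultimately show ?thesis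
    by blast
qed

theorem lemma2:
  fixes r :: nat and a :: "nat \<Rightarrow> int \<Rightarrow> complex"
  assumes "infinite_dimensional {x. is_solution r a x \<and> supp_seq x \<subseteq> {0..}}"
  shows "\<exists>J::int. J > 0 \<and> (\<exists>x. is_solution r a x \<and> x \<noteq> (\<lambda>_. 0) \<and> supp_seq x \<subseteq> {1..J})"
proof -
  define W where "W = {x. is_solution r a x \<and> supp_seq x \<subseteq> {0..}}"
  have "seq.subspace W"
    unfolding W_def Collect_conj_eq
    by (intro seq.subspace_inter seq_subspace_solutions seq_subspace_supp_subset)
  obtain B where B: "finite B" "B \<subseteq> W" "seq.independent B" "card B = r + 2"
    using infinite_dimensional_independent_subset[of W "r + 2"] assms unfolding W_def by blast
  obtain F where F: "finite F" "\<forall>x\<in>seq.span B. (\<forall>n\<in>F. x n = 0) \<longrightarrow> x = 0"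
    using seq_span_determined_by_finitely_many_values[OF B(1)] by blast
  define J where "J = Max (insert 1 F)"
  have "\<exists>x\<in>seq.span B. x \<noteq> 0 \<and> (\<forall>p\<in>insert 0 {J<..J + int r}. x p = 0)"
    using B(4) by (intro seq_span_has_nonzero_vanishing_on B(3)) (simp_all add: card_insert_if)
  then obtain x where x: "x \<in> seq.span B" "x \<noteq> 0" "\<forall>p\<in>insert 0 {J<..J + int r}. x p = 0"
    by blast
  have "x \<in> W"
    using x(1) B(2) seq.span_minimal \<open>seq.subspace W\<close> by blast
  moreover obtain n0 where "n0 \<in> F" "x n0 \<noteq> 0"
    using F(2) x(1,2) by (auto simp: fun_eq_iff)
  moreover have "n0 \<le> J"
    using \<open>n0 \<in> F\<close> F(1) unfolding J_def by simp
  ultimately show ?thesis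
    using truncated_solution_nonzero[OF _ _ x(3)] unfolding W_def by blast
qed

end
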